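(* Let $R$ be a commutative ring with unit and let $M_0\prec M\subset\mathbb{M}_R$. Then the homomorphism $\rho^R_{M,M_0}\colon R[q]^M\to R[q]^{M_0}$ is injective.
   Context: All rings are commutative with unit; $q$ is an indeterminate. $\mathbb{M}_R$ denotes the set of monic polynomials in $R[q]$. For $M\subset\mathbb{M}_R$, $M^*$ is the multiplicative set generated by $M$, directed by divisibility, and $R[q]^M=\varprojlim_{f\in M^*}R[q]/(f)$; for $M'\subset M$, $\rho^R_{M,M'}\colon R[q]^M\to R[q]^{M'}$ is induced by the identity of $R[q]$. For $f,g\in\mathbb{M}_R$ write $f\Rightarrow_R g$ if there exist an ideal $I\subset R$ with $\bigcap_{j\ge0}I^j=(0)$ and an integer $m\ge0$ such that $f^m\in (g)+I[q]$. For $M',M\subset\mathbb{M}_R$ write $M'\prec M$ if $M'\subset M$ and for each $f\in M$ there is a finite sequence $f_0\Rightarrow_R f_1\Rightarrow_R\cdots\Rightarrow_R f_r=f$ ($r\ge0$) of elements of $M$ with $f_0\in M'$. *)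

theory Defs
  imports "HOL-Computational_Algebra.Polynomial" "HOL-Library.Multiset"
begin

definition monic_polys :: "'a::comm_ring_1 poly set" where
  "monic_polys = {f. lead_coeff f = 1}"

definition mult_gen :: "'a::comm_ring_1 poly set \<Rightarrow> 'a poly set" where
  "mult_gen M = {prod_mset A | A. set_mset A \<subseteq> M}"

definition pcoset :: "'a::comm_ring_1 poly \<Rightarrow> 'a poly \<Rightarrow> 'a poly set" where
  "pcoset f p = {p + f * h | h. True}"

(* R[q]^M = inverse limit over f in M^* (directed by divisibility) of R[q]/(f),
   realised as the set of compatible families of residue classes *)
definition invlim :: "'a::comm_ring_1 poly set \<Rightarrow> ('a poly \<Rightarrow> 'a poly set) set" where
  "invlim M = {x. (\<forall>f\<in>mult_gen M. \<exists>p. x f = pcoset f p)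
                \<and> (\<forall>f. f \<notin> mult_gen M \<longrightarrow> x f = {})
                \<and> (\<forall>f\<in>mult_gen M. \<forall>g\<in>mult_gen M. f dvd g \<longrightarrow> x g \<subseteq> x f)}"

definition rho :: "'a::comm_ring_1 poly set \<Rightarrow> 'a poly set \<Rightarrow> ('a poly \<Rightarrow> 'a poly set) \<Rightarrow> ('a poly \<Rightarrow> 'a poly set)" where
  "rho M M' x = (\<lambda>f. if f \<in> mult_gen M' then x f else {})"

definition is_ideal :: "'a::comm_ring_1 set \<Rightarrow> bool" where
  "is_ideal I \<longleftrightarrow> 0 \<in> I \<and> (\<forall>a\<in>I. \<forall>b\<in>I. a + b \<in> I) \<and> (\<forall>r. \<forall>a\<in>I. r * a \<in> I)"

definition ideal_span :: "'a::comm_ring_1 set \<Rightarrow> 'a set" where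
  "ideal_span S = \<Inter>{J. is_ideal J \<and> S \<subseteq> J}"

fun ideal_pow :: "'a::comm_ring_1 set \<Rightarrow> nat \<Rightarrow> 'a set" where
  "ideal_pow I 0 = UNIV"
| "ideal_pow I (Suc j) = ideal_span {a * b | a b. a \<in> I \<and> b \<in> ideal_pow I j}"

definition poly_ext :: "'a::comm_ring_1 set \<Rightarrow> 'a poly set" where
  "poly_ext I = {p. \<forall>i. coeff p i \<in> I}"

definition arrow :: "'a::comm_ring_1 poly \<Rightarrow> 'a poly \<Rightarrow> bool" where
  "arrow f g \<longleftrightarrow> (\<exists>I m. is_ideal I \<and> (\<Inter>j. ideal_pow I j) = {0} \<and>
      (\<exists>h p. p \<in> poly_ext I \<and> f ^ m = g * h + p))"

definition prec :: "'a::comm_ring_1 poly set \<Rightarrow> 'a poly set \<Rightarrow> bool" where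
  "prec M' M \<longleftrightarrow> M' \<subseteq> M \<and>
     (\<forall>f\<in>M. \<exists>f0\<in>M'. (\<lambda>a b. a \<in> M \<and> b \<in> M \<and> arrow a b)\<^sup>*\<^sup>* f0 f)"

end

theory Submission
  imports Defs
begin

(* Let x, y be compatible families that agree at all products of a set T, let f lie in T, and
   let f^m = g u + p where p has coefficients in an ideal I whose powers intersect in 0. Then
   f^(mN) is congruent to p^N modulo g. Comparing x and y at f^(mN) g h, where they agree modulo
   f^(mN) h, shows that the difference of their components at g h is congruent, modulo the monic
   polynomial g h, to a multiple of p^N, which has coefficients in I^N. Division by a monic
   polynomial preserves coefficient ideals, so the remainder of that difference has coefficients
   in every I^N and vanishes: x and y also agree at g h. Following the chains
   f_0 => ... => f_r spreads agreement from the products of M0 to all of M^*. *)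

section \<open>Ideals and coefficient ideals\<close>

lemma module_mult: "module ((*) :: 'a::comm_ring_1 \<Rightarrow> 'a \<Rightarrow> 'a)"
  by unfold_locales (simp_all add: algebra_simps)

lemma is_ideal_iff_subspace: "is_ideal J \<longleftrightarrow> module.subspace (*) J"
  unfolding is_ideal_def module.subspace_def[OF module_mult] by blast

lemma is_ideal_diff: "is_ideal J \<Longrightarrow> a \<in> J \<Longrightarrow> b \<in> J \<Longrightarrow> a - b \<in> J"
  unfolding is_ideal_iff_subspace by (rule module.subspace_diff[OF module_mult])

lemma is_ideal_sum: "is_ideal J \<Longrightarrow> (\<And>i. i \<in> A \<Longrightarrow> f i \<in> J) \<Longrightarrow> sum f A \<in> J"
  unfolding is_ideal_iff_subspace by (rule module.subspace_sum[OF module_mult])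

lemma is_ideal_ideal_span: "is_ideal (ideal_span S)"
  unfolding is_ideal_def ideal_span_def by auto

lemma ideal_span_superset: "S \<subseteq> ideal_span S"
  unfolding ideal_span_def by auto

lemma is_ideal_ideal_pow: "is_ideal (ideal_pow I n)"
  by (cases n) (auto simp: is_ideal_def is_ideal_ideal_span[unfolded is_ideal_def])

lemma is_ideal_poly_ext:
  assumes "is_ideal J"
  shows "is_ideal (poly_ext J)"
proof -
  have "coeff (r * p) n \<in> J" if "p \<in> poly_ext J" for r p n
    using that assms unfolding coeff_mult
    by (intro is_ideal_sum) (auto simp: is_ideal_def poly_ext_def)
  then show ?thesis
    using assms by (auto simp: is_ideal_def poly_ext_def)
qed

lemma poly_ext_mult_right: "is_ideal J \<Longrightarrow> p \<in> poly_ext J \<Longrightarrow> p * r \<in> poly_ext J"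
  using is_ideal_poly_ext[of J] unfolding is_ideal_def by (metis mult.commute)

lemma poly_ext_mult_ideal_pow:
  assumes "p \<in> poly_ext I" and "q \<in> poly_ext (ideal_pow I n)"
  shows "p * q \<in> poly_ext (ideal_pow I (Suc n))"
proof -
  have "coeff p i * coeff q (k - i) \<in> ideal_pow I (Suc n)" for i k
    using assms ideal_span_superset by (fastforce simp: poly_ext_def)
  then have "coeff (p * q) k \<in> ideal_pow I (Suc n)" for k
    unfolding coeff_mult by (rule is_ideal_sum[OF is_ideal_ideal_pow])
  then show ?thesis
    unfolding poly_ext_def by blast
qed

lemma power_in_poly_ext_ideal_pow:
  assumes "p \<in> poly_ext I"
  shows "p ^ n \<in> poly_ext (ideal_pow I n)"
  using assms
proof (induction n)
  case (Suc n)
  then show ?case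
    using poly_ext_mult_ideal_pow[of p I "p ^ n" n] by simp
qed (simp add: poly_ext_def)

lemma poly_ext_Inter_ideal_pow:
  assumes "(\<Inter>j. ideal_pow I j) = {0}" and "\<And>j. r \<in> poly_ext (ideal_pow I j)"
  shows "r = 0"
proof (rule poly_eqI)
  fix i
  have "coeff r i \<in> (\<Inter>j. ideal_pow I j)"
    using assms(2) by (auto simp: poly_ext_def)
  then show "coeff r i = coeff 0 i"
    using assms(1) by simp
qed

lemma monom_in_poly_ext: "is_ideal J \<Longrightarrow> c \<in> J \<Longrightarrow> monom c k \<in> poly_ext J"
  by (simp add: poly_ext_def is_ideal_def)

section \<open>Division by monic polynomials\<close>

lemma degree_monic_mult:
  fixes G :: "'a::comm_ring_1 poly"
  assumes "lead_coeff G = 1" and "s \<noteq> 0"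
  shows "degree (G * s) = degree G + degree s"
proof (rule antisym[OF degree_mult_le le_degree])
  have "coeff (G * s) (degree G + degree s) = lead_coeff s"
    using assms(1) by (simp add: coeff_mult_degree_sum)
  with assms(2) show "coeff (G * s) (degree G + degree s) \<noteq> 0"
    by simp
qed

lemma lead_coeff_monic_mult:
  fixes G :: "'a::comm_ring_1 poly"
  assumes "lead_coeff G = 1" and "lead_coeff s = 1"
  shows "lead_coeff (G * s) = 1"
proof -
  have "s \<noteq> 0"
    using assms(2) by (metis coeff_0 zero_neq_one)
  then show ?thesis
    using assms by (simp add: degree_monic_mult coeff_mult_degree_sum)
qed

lemma monic_dvd_degree_less_imp_zero:
  fixes G :: "'a::comm_ring_1 poly"
  assumes "lead_coeff G = 1" and "G dvd r" and "r = 0 \<or> degree r < degree G"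
  shows "r = 0"
proof (rule ccontr)
  assume "r \<noteq> 0"
  moreover obtain s where "r = G * s"
    using assms(2) by blast
  ultimately have "degree r = degree G + degree s"
    using assms(1) degree_monic_mult[of G s] by (metis mult_zero_right)
  with \<open>r \<noteq> 0\<close> assms(3) show False
    by simp
qed

lemma monic_cancel_leading_term:
  fixes G :: "'a::comm_ring_1 poly"
  assumes G: "lead_coeff G = 1" and J: "is_ideal J" and t: "t \<in> poly_ext J"
    and deg: "degree G \<le> degree t"
  obtains m where "m \<in> poly_ext J" and "t - m * G = 0 \<or> degree (t - m * G) < degree t"
proof -
  define m where "m = monom (lead_coeff t) (degree t - degree G)"
  have "lead_coeff t \<in> J"
    using t by (simp add: poly_ext_def)
  then have "m \<in> poly_ext J"
    unfolding m_def by (rule monom_in_poly_ext[OF J])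
  moreover have "degree (m * G) \<le> degree t"
    using degree_mult_le[of m G] degree_monom_le[of "lead_coeff t" "degree t - degree G"] deg
    unfolding m_def by linarith
  then have "degree (t - m * G) \<le> degree t"
    using degree_diff_le_max[of t "m * G"] by simp
  moreover have "coeff (t - m * G) (degree t) = 0"
    unfolding m_def using deg G by (simp add: coeff_monom_mult)
  ultimately show ?thesis
    using that eq_zero_or_degree_less by blast
qed

lemma monic_divide_in_poly_ext:
  fixes G :: "'a::comm_ring_1 poly"
  assumes G: "lead_coeff G = 1" and J: "is_ideal J" and "t \<in> poly_ext J"
  shows "\<exists>s r. t = G * s + r \<and> (r = 0 \<or> degree r < degree G) \<and> r \<in> poly_ext J"
  using \<open>t \<in> poly_ext J\<close>
proof (induction "degree t" arbitrary: t rule: less_induct)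
  case less
  show ?case
  proof (cases "degree t < degree G")
    case True
    with less.prems show ?thesis
      by (intro exI[of _ 0] exI[of _ t]) simp
  next
    case False
    then obtain m where m: "m \<in> poly_ext J"
      and reduced: "t - m * G = 0 \<or> degree (t - m * G) < degree t"
      using monic_cancel_leading_term[OF G J less.prems] by auto
    have "t - m * G \<in> poly_ext J"
      using J less.prems m by (simp add: is_ideal_diff is_ideal_poly_ext poly_ext_mult_right)
    moreover have "0 \<in> poly_ext J"
      using J by (simp add: poly_ext_def is_ideal_def)
    ultimately obtain s r where "t - m * G = G * s + r"
      and "r = 0 \<or> degree r < degree G" and "r \<in> poly_ext J"
      using reduced less.hyps by (metis add.right_neutral mult_zero_right)
    moreover have "t = G * (s + m) + r" if "t - m * G = G * s + r"
      using that by (simp add: algebra_simps)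
    ultimately show ?thesis
      by blast
  qed
qed

lemma monic_remainder_in_poly_ext:
  fixes G :: "'a::comm_ring_1 poly"
  assumes G: "lead_coeff G = 1" and J: "is_ideal J" and t: "t \<in> poly_ext J"
    and "G dvd t - r" and r: "r = 0 \<or> degree r < degree G"
  shows "r \<in> poly_ext J"
proof -
  obtain s r' where r': "t = G * s + r'" "r' = 0 \<or> degree r' < degree G" "r' \<in> poly_ext J"
    using monic_divide_in_poly_ext[OF G J t] by blast
  have "r' - r = (t - r) - G * s"
    using r'(1) by simp
  then have "G dvd r' - r"
    using dvd_diff[OF \<open>G dvd t - r\<close> dvd_triv_left] by metis
  moreover have "r' - r = 0 \<or> degree (r' - r) < degree G"
    using r'(2) r degree_diff_le_max[of r' r] by auto
  ultimately have "r' - r = 0"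
    using monic_dvd_degree_less_imp_zero[OF G] by blast
  with r'(3) show ?thesis
    by simp
qed

lemma monic_dvd_if_congruent_ideal_pow:
  fixes G :: "'a::comm_ring_1 poly"
  assumes G: "lead_coeff G = 1" and I: "(\<Inter>j. ideal_pow I j) = {0}"
    and congruent: "\<And>N. \<exists>t\<in>poly_ext (ideal_pow I N). G dvd d - t"
  shows "G dvd d"
proof -
  have "is_ideal UNIV" and "d \<in> poly_ext UNIV"
    by (simp_all add: is_ideal_def poly_ext_def)
  then obtain s r where d: "d = G * s + r" and r: "r = 0 \<or> degree r < degree G"
    using monic_divide_in_poly_ext[OF G] by blast
  have "r \<in> poly_ext (ideal_pow I N)" for N
  proof -
    obtain t where t: "t \<in> poly_ext (ideal_pow I N)" and "G dvd d - t"
      using congruent by blast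
    moreover have "t - r = G * s - (d - t)"
      using d by simp
    ultimately have "G dvd t - r"
      using dvd_diff[OF dvd_triv_left] by metis
    with t show ?thesis
      using monic_remainder_in_poly_ext[OF G is_ideal_ideal_pow] r by blast
  qed
  then have "r = 0"
    by (rule poly_ext_Inter_ideal_pow[OF I])
  with d show ?thesis
    by simp
qed

section \<open>Compatible families of residue classes\<close>

lemma mult_gen_prod_mset: "set_mset A \<subseteq> M \<Longrightarrow> prod_mset A \<in> mult_gen M"
  unfolding mult_gen_def by blast

lemma mult_gen_base: "f \<in> M \<Longrightarrow> f \<in> mult_gen M"
  using mult_gen_prod_mset[of "{#f#}"] by simp

lemma mult_gen_mult:
  assumes "f \<in> mult_gen M" and "g \<in> mult_gen M"
  shows "f * g \<in> mult_gen M"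
proof -
  obtain A B where "f = prod_mset A" "g = prod_mset B" "set_mset (A + B) \<subseteq> M"
    using assms unfolding mult_gen_def by auto
  then show ?thesis
    using mult_gen_prod_mset[of "A + B"] by simp
qed

lemma mult_gen_power: "f \<in> mult_gen M \<Longrightarrow> f ^ n \<in> mult_gen M"
  by (induction n) (auto simp: mult_gen_mult mult_gen_prod_mset[of "{#}", simplified])

lemma mult_gen_mono: "M \<subseteq> M' \<Longrightarrow> mult_gen M \<subseteq> mult_gen M'"
  unfolding mult_gen_def by blast

lemma mult_gen_insert:
  assumes "F \<in> mult_gen (insert g T)"
  obtains k h where "F = g ^ k * h" and "h \<in> mult_gen T"
proof -
  obtain A where A: "F = prod_mset A" "set_mset A \<subseteq> insert g T"
    using assms unfolding mult_gen_def by blast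
  define B where "B = filter_mset (\<lambda>a. a \<noteq> g) A"
  have "A = replicate_mset (count A g) g + B"
    unfolding B_def by (metis filter_eq_replicate_mset multiset_partition)
  then have "F = g ^ count A g * prod_mset B"
    using A(1) by (metis prod_mset.union prod_mset_replicate_mset)
  moreover have "set_mset B \<subseteq> T"
    using A(2) unfolding B_def by auto
  ultimately show ?thesis
    using that mult_gen_prod_mset by blast
qed

lemma mult_gen_monic:
  assumes "M \<subseteq> monic_polys" and "f \<in> mult_gen M"
  shows "lead_coeff f = 1"
proof -
  obtain A where "f = prod_mset A" "set_mset A \<subseteq> M"
    using assms(2) unfolding mult_gen_def by blast
  then show ?thesis
  proof (induction A arbitrary: f)
    case (add a A)
    with assms(1) show ?case
      by (auto simp: monic_polys_def lead_coeff_monic_mult)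
  qed simp
qed

lemma mem_pcoset_iff: "b \<in> pcoset f a \<longleftrightarrow> f dvd b - a"
  unfolding pcoset_def by (auto simp: dvd_def algebra_simps)

lemma pcoset_eqI:
  assumes "f dvd a - b"
  shows "pcoset f a = pcoset f b"
proof -
  have "f dvd c - a \<longleftrightarrow> f dvd c - b" for c
    using assms dvd_add_left_iff[of f "a - b" "c - a"] by (simp add: algebra_simps)
  then show ?thesis
    unfolding set_eq_iff mem_pcoset_iff by blast
qed

lemma invlim_outside: "x \<in> invlim M \<Longrightarrow> f \<notin> mult_gen M \<Longrightarrow> x f = {}"
  by (simp add: invlim_def)

lemma invlim_antimono:
  "x \<in> invlim M \<Longrightarrow> f \<in> mult_gen M \<Longrightarrow> g \<in> mult_gen M \<Longrightarrow> f dvd g \<Longrightarrow> x g \<subseteq> x f"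
  by (simp add: invlim_def)

lemma invlim_eq_pcoset:
  assumes "x \<in> invlim M" and "f \<in> mult_gen M" and "a \<in> x f"
  shows "x f = pcoset f a"
proof -
  obtain c where "x f = pcoset f c"
    using assms(1,2) by (auto simp: invlim_def)
  moreover have "f dvd c - a"
    using assms(3) calculation by (metis dvd_minus_iff minus_diff_eq mem_pcoset_iff)
  ultimately show ?thesis
    using pcoset_eqI by metis
qed

lemma invlim_nonempty:
  assumes "x \<in> invlim M" and "f \<in> mult_gen M"
  obtains a where "a \<in> x f"
proof -
  obtain c where "x f = pcoset f c"
    using assms by (auto simp: invlim_def)
  then show ?thesis
    using that[of c] mem_pcoset_iff[of c f c] by simp
qed

lemma invlim_dvd_diff:
  assumes x: "x \<in> invlim M" and K: "K \<in> mult_gen M" and H: "H \<in> mult_gen M"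
    and "K dvd H" and "a \<in> x K" and "b \<in> x H"
  shows "K dvd b - a"
  using invlim_antimono[OF x K H] invlim_eq_pcoset[OF x K] assms(4-) mem_pcoset_iff by blast

lemma invlim_dvd_diff_if_eq:
  assumes x: "x \<in> invlim M" and y: "y \<in> invlim M" and K: "K \<in> mult_gen M" and H: "H \<in> mult_gen M"
    and "K dvd H" and "x K = y K" and "a \<in> x H" and "b \<in> y H"
  shows "K dvd a - b"
proof -
  have "b \<in> x K"
    using invlim_antimono[OF y K H] assms(5-) by auto
  then show ?thesis
    using invlim_dvd_diff[OF x K H] assms(5,7) by blast
qed

section \<open>Propagating agreement along arrows\<close>

lemma diff_dvd_power_diff:
  fixes a b :: "'a::comm_ring_1"
  shows "a - b dvd a ^ n - b ^ n"
proof (induction n)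
  case (Suc n)
  have "a ^ Suc n - b ^ Suc n = a * (a ^ n - b ^ n) + (a - b) * b ^ n"
    by (simp add: algebra_simps)
  with Suc show ?case
    by simp
qed simp

lemma power_add_eq_mult_add_power:
  fixes a b :: "'a::comm_ring_1"
  obtains c where "(a + b) ^ n = a * c + b ^ n"
  using diff_dvd_power_diff[of "a + b" b n] by (auto simp: dvd_def algebra_simps)

lemma power_mult_add_poly_ext:
  assumes "is_ideal I" and "p \<in> poly_ext I"
  obtains p' where "(g * u + p) ^ k = g ^ k * u ^ k + p'" and "p' \<in> poly_ext I"
proof -
  obtain c where "(p + g * u) ^ k = p * c + (g * u) ^ k"
    using power_add_eq_mult_add_power .
  moreover have "p * c \<in> poly_ext I"
    using assms by (rule poly_ext_mult_right)
  ultimately show ?thesis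
    using that[of "p * c"] by (simp add: algebra_simps power_mult_distrib)
qed

lemma invlim_eq_at_mult:
  assumes x: "x \<in> invlim M" and y: "y \<in> invlim M"
    and f: "f \<in> mult_gen M" and g: "g \<in> mult_gen M" and h: "h \<in> mult_gen M"
    and monic: "lead_coeff (g * h) = 1"
    and f_power: "f ^ m = g * u + p" and p: "p \<in> poly_ext I"
    and I: "(\<Inter>j. ideal_pow I j) = {0}"
    and agree: "\<And>n. x (f ^ n * h) = y (f ^ n * h)"
  shows "x (g * h) = y (g * h)"
proof -
  let ?G = "g * h"
  have G: "?G \<in> mult_gen M"
    using g h by (rule mult_gen_mult)
  obtain a b where a: "a \<in> x ?G" and b: "b \<in> y ?G"
    using invlim_nonempty[OF x G] invlim_nonempty[OF y G] by metis
  have "\<exists>t\<in>poly_ext (ideal_pow I N). ?G dvd (a - b) - t" for N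
  proof -
    define F where "F = f ^ (m * N)"
    have FG: "F * ?G \<in> mult_gen M" and Fh: "F * h \<in> mult_gen M"
      unfolding F_def using mult_gen_power[OF f] G h by (simp_all only: mult_gen_mult)
    obtain a' b' where a': "a' \<in> x (F * ?G)" and b': "b' \<in> y (F * ?G)"
      using invlim_nonempty[OF x FG] invlim_nonempty[OF y FG] by metis
    have "?G dvd a' - a" and "?G dvd b' - b"
      using invlim_dvd_diff[OF x G FG] invlim_dvd_diff[OF y G FG] a b a' b' by simp_all
    have "F * h dvd F * ?G"
      by (rule mult_dvd_mono[OF dvd_refl dvd_triv_right])
    moreover have "x (F * h) = y (F * h)"
      unfolding F_def by (rule agree)
    ultimately obtain w where w: "a' - b' = F * h * w"
      using invlim_dvd_diff_if_eq[OF x y Fh FG] a' b' by (blast elim: dvdE)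
    obtain c where F_mod_g: "F = g * u * c + p ^ N"
      unfolding F_def power_mult f_power by (rule power_add_eq_mult_add_power)
    have "a' - b' = ?G * (u * c * w) + p ^ N * (h * w)"
      unfolding w F_mod_g by (simp add: algebra_simps)
    then have "(a - b) - p ^ N * (h * w) = ?G * (u * c * w) - (a' - a) + (b' - b)"
      by (simp add: algebra_simps)
    also have "?G dvd \<dots>"
      using \<open>?G dvd a' - a\<close> \<open>?G dvd b' - b\<close> by simp
    finally have "?G dvd (a - b) - p ^ N * (h * w)" .
    moreover have "p ^ N * (h * w) \<in> poly_ext (ideal_pow I N)"
      using is_ideal_ideal_pow power_in_poly_ext_ideal_pow[OF p] by (rule poly_ext_mult_right)
    ultimately show ?thesis
      by blast
  qed
  then have "?G dvd a - b"
    by (rule monic_dvd_if_congruent_ideal_pow[OF monic I])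
  then show ?thesis
    using invlim_eq_pcoset[OF x G a] invlim_eq_pcoset[OF y G b] pcoset_eqI by metis
qed

lemma rho_eq_iff: "rho M T x = rho M T y \<longleftrightarrow> (\<forall>F\<in>mult_gen T. x F = y F)"
  unfolding rho_def fun_eq_iff by metis

lemma rho_eq_subset:
  assumes "T \<subseteq> T'" and "rho M T' x = rho M T' y"
  shows "rho M T x = rho M T y"
  using assms mult_gen_mono unfolding rho_eq_iff by blast

lemma rho_self: "x \<in> invlim M \<Longrightarrow> rho M M x = x"
  unfolding rho_def by (auto simp: fun_eq_iff invlim_outside)

lemma rho_eq_insert_arrow:
  assumes x: "x \<in> invlim M" and y: "y \<in> invlim M" and monic: "M \<subseteq> monic_polys"
    and T: "T \<subseteq> M" and eq: "rho M T x = rho M T y"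
    and f: "f \<in> T" and g: "g \<in> M" and arrow: "arrow f g"
  shows "rho M (insert g T) x = rho M (insert g T) y"
proof -
  have T_gen: "mult_gen T \<subseteq> mult_gen M"
    using T by (rule mult_gen_mono)
  obtain I m u p where I: "is_ideal I" "(\<Inter>j. ideal_pow I j) = {0}"
    and p: "p \<in> poly_ext I" and f_power: "f ^ m = g * u + p"
    using arrow unfolding arrow_def by blast
  have "x F = y F" if F_gen: "F \<in> mult_gen (insert g T)" for F
  proof -
    obtain k h where F: "F = g ^ k * h" and h: "h \<in> mult_gen T"
      using mult_gen_insert[OF F_gen] .
    obtain p' where f_power': "f ^ (m * k) = g ^ k * u ^ k + p'" and p': "p' \<in> poly_ext I"
      using power_mult_add_poly_ext[OF I(1) p] unfolding power_mult f_power .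
    have f_gen: "f \<in> mult_gen M" and h_gen: "h \<in> mult_gen M"
      using f h T T_gen by (auto intro: mult_gen_base)
    have g_k: "g ^ k \<in> mult_gen M"
      using g by (simp add: mult_gen_base mult_gen_power)
    then have "lead_coeff (g ^ k * h) = 1"
      using mult_gen_monic[OF monic mult_gen_mult] h_gen by blast
    moreover have "x (f ^ n * h) = y (f ^ n * h)" for n
      using eq f h mult_gen_base[of f T] unfolding rho_eq_iff
      by (simp add: mult_gen_mult mult_gen_power)
    ultimately show ?thesis
      unfolding F using invlim_eq_at_mult[OF x y f_gen g_k h_gen _ f_power' p' I(2)] by blast
  qed
  then show ?thesis
    by (simp add: rho_eq_iff)
qed

lemma rho_eq_insert_chain:
  assumes x: "x \<in> invlim M" and y: "y \<in> invlim M" and monic: "M \<subseteq> monic_polys"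
    and chain: "(\<lambda>a b. a \<in> M \<and> b \<in> M \<and> arrow a b)\<^sup>*\<^sup>* f g"
    and "T \<subseteq> M" and "f \<in> T" and "rho M T x = rho M T y"
  shows "rho M (insert g T) x = rho M (insert g T) y"
  using chain assms(5-)
proof (induction arbitrary: T rule: converse_rtranclp_induct)
  case base
  then show ?case
    by (simp add: insert_absorb)
next
  case (step f f')
  then have "rho M (insert f' T) x = rho M (insert f' T) y"
    using rho_eq_insert_arrow[OF x y monic] by blast
  then have "rho M (insert g (insert f' T)) x = rho M (insert g (insert f' T)) y"
    using step by simp
  then show ?case
    by (rule rho_eq_subset[rotated]) blast
qed

lemma rho_eq_union_finite:
  assumes x: "x \<in> invlim M" and y: "y \<in> invlim M" and monic: "M \<subseteq> monic_polys"
    and prec: "prec M0 M" and eq: "rho M M0 x = rho M M0 y"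
    and "finite B" and "B \<subseteq> M"
  shows "rho M (M0 \<union> B) x = rho M (M0 \<union> B) y"
  using \<open>finite B\<close> \<open>B \<subseteq> M\<close>
proof (induction B rule: finite_induct)
  case (insert g B)
  obtain f where "f \<in> M0" and "(\<lambda>a b. a \<in> M \<and> b \<in> M \<and> arrow a b)\<^sup>*\<^sup>* f g"
    using prec insert.prems unfolding prec_def by blast
  moreover have "M0 \<union> B \<subseteq> M"
    using prec insert.prems unfolding prec_def by blast
  ultimately show ?case
    using rho_eq_insert_chain[OF x y monic] insert by simp
qed (simp add: eq)

theorem theorem3p4:
  fixes M M0 :: "'a::comm_ring_1 poly set"
  assumes "M \<subseteq> monic_polys" and "prec M0 M"
  shows "inj_on (rho M M0) (invlim M)"
proof (rule inj_onI)
  fix x y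
  assume x: "x \<in> invlim M" and y: "y \<in> invlim M" and eq: "rho M M0 x = rho M M0 y"
  have "x F = y F" if F_gen: "F \<in> mult_gen M" for F
  proof -
    obtain A where F: "F = prod_mset A" and A: "set_mset A \<subseteq> M"
      using F_gen unfolding mult_gen_def by blast
    have "rho M (M0 \<union> set_mset A) x = rho M (M0 \<union> set_mset A) y"
      using rho_eq_union_finite[OF x y assms eq] A by simp
    moreover have "F \<in> mult_gen (M0 \<union> set_mset A)"
      unfolding F by (rule mult_gen_prod_mset) blast
    ultimately show ?thesis
      unfolding rho_eq_iff by blast
  qed
  then have "rho M M x = rho M M y"
    unfolding rho_eq_iff by blast
  then show "x = y"
    using rho_self[OF x] rho_self[OF y] by simp
qed

end
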